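(* Consider two candidates $P,Q$. Let $A$ be the voters preferring $P$ (with strengths $\alpha_i=d(i,Q)/d(i,P)$) and $B$ the voters preferring $Q$ (with strengths $\beta_j=d(j,P)/d(j,Q)$). If $$\sum_{i\in A}\frac{\sqrt2\alpha_i-1}{\alpha_i+1}\ \ge\ \sum_{j\in B,\ \beta_j>\sqrt2}\frac{\beta_j-\sqrt2}{\beta_j-1}-\sum_{j\in B,\ \beta_j\le\sqrt2}\frac{\sqrt2-\beta_j}{\beta_j+1},$$ then $SC(P)\le\sqrt2\,SC(Q)$.
   Context: Voters $N=A\cup B$ and candidates $P,Q$ are points of an arbitrary metric space $(X,d)$, where $A=\{i: d(i,P)\le d(i,Q)\}$ and $B=N\setminus A$ consists of voters with $d(j,Q)<d(j,P)$ (or, more generally, a partition into voters preferring $P$ and voters preferring $Q$ consistent with the distances). $SC(Y)=\sum_{i\in N}d(i,Y)$. *)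

theory Defs
  imports Complex_Main
begin

definition SC :: "'v set \<Rightarrow> ('v \<Rightarrow> 'a::metric_space) \<Rightarrow> 'a \<Rightarrow> real" where
  "SC N loc Y = (\<Sum>i\<in>N. dist (loc i) Y)"

definition strengthP :: "('v \<Rightarrow> 'a::metric_space) \<Rightarrow> 'a \<Rightarrow> 'a \<Rightarrow> 'v \<Rightarrow> real" where
  "strengthP loc P Q i = dist (loc i) Q / dist (loc i) P"

definition strengthQ :: "('v \<Rightarrow> 'a::metric_space) \<Rightarrow> 'a \<Rightarrow> 'a \<Rightarrow> 'v \<Rightarrow> real" where
  "strengthQ loc P Q j = dist (loc j) P / dist (loc j) Q"

end

theory Submission
  imports Defs
begin

(* With D = d(P,Q), the triangle inequalities D <= d(i,P) + d(i,Q) and d(i,P) <= d(i,Q) + D bound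
   the gap d(i,P) - c d(i,Q) of each voter by D times a weight depending only on its strength:
   -(c alpha - 1)/(alpha + 1) for a voter preferring P, (beta - c)/(beta - 1) for a voter preferring Q
   with beta > c, and -(c - beta)/(beta + 1) when beta <= c. Summing over the voters,
   SC(P) - c SC(Q) is at most D times the total weight, which the hypothesis makes nonpositive.
   Nothing beyond c >= 1 is used about c = sqrt 2. *)

lemma gap_le_of_prefers_P:
  fixes p q D c :: real
  assumes "1 \<le> c" "0 < p" "p \<le> q" "D \<le> p + q"
  shows "p - c * q \<le> - (D * ((c * (q/p) - 1) / (q/p + 1)))"
proof -
  define a where "a = q/p"
  have q: "q = a * p" using \<open>0 < p\<close> by (simp add: a_def)
  have "1 \<le> a" using assms by (simp add: a_def)
  then have "0 \<le> c * a - 1" using \<open>1 \<le> c\<close> using mult_mono[of 1 c 1 a] by simp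
  have "D / (a + 1) \<le> p" using assms \<open>1 \<le> a\<close> q by (simp add: divide_le_eq algebra_simps)
  have "p - c * q = - ((c * a - 1) * p)" using q by (simp add: algebra_simps)
  also have "\<dots> \<le> - ((c * a - 1) * (D / (a + 1)))"
    using \<open>D / (a + 1) \<le> p\<close> \<open>0 \<le> c * a - 1\<close> by (meson le_imp_neg_le mult_left_mono)
  finally show ?thesis by (simp add: a_def mult.commute)
qed

lemma gap_le_of_strongly_prefers_Q:
  fixes p q D c :: real
  assumes "1 \<le> c" "0 < q" "c < p/q" "p \<le> q + D"
  shows "p - c * q \<le> D * ((p/q - c) / (p/q - 1))"
proof -
  define b where "b = p/q"
  have p: "p = b * q" using \<open>0 < q\<close> by (simp add: b_def)
  have "c < b" using assms by (simp add: b_def)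
  then have "0 < b - 1" "0 \<le> b - c" using \<open>1 \<le> c\<close> by simp_all
  then have "q \<le> D / (b - 1)" using assms p by (simp add: le_divide_eq algebra_simps)
  have "p - c * q = (b - c) * q" using p by (simp add: algebra_simps)
  also have "\<dots> \<le> (b - c) * (D / (b - 1))"
    using \<open>q \<le> D / (b - 1)\<close> \<open>0 \<le> b - c\<close> by (rule mult_left_mono)
  finally show ?thesis by (simp add: b_def mult.commute)
qed

lemma gap_le_of_weakly_prefers_Q:
  fixes p q D c :: real
  assumes "0 < q" "0 \<le> p" "p/q \<le> c" "D \<le> p + q"
  shows "p - c * q \<le> - (D * ((c - p/q) / (p/q + 1)))"
proof -
  define b where "b = p/q"
  have p: "p = b * q" using \<open>0 < q\<close> by (simp add: b_def)
  have "0 \<le> b" "0 \<le> c - b" using assms by (simp_all add: b_def)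
  then have "D / (b + 1) \<le> q" using assms p by (simp add: divide_le_eq algebra_simps)
  have "p - c * q = - ((c - b) * q)" using p by (simp add: algebra_simps)
  also have "\<dots> \<le> - ((c - b) * (D / (b + 1)))"
    using \<open>D / (b + 1) \<le> q\<close> \<open>0 \<le> c - b\<close> by (meson le_imp_neg_le mult_left_mono)
  finally show ?thesis by (simp add: b_def mult.commute)
qed

lemma SC_le_scaled_if_strength_condition:
  fixes N A B :: "'v set" and loc :: "'v \<Rightarrow> 'a::metric_space" and P Q :: 'a and c :: real
  assumes "1 \<le> c" "finite N"
    and "A \<union> B = N" and "A \<inter> B = {}"
    and A_prefers_P: "\<And>i. i \<in> A \<Longrightarrow> 0 < dist (loc i) P \<and> dist (loc i) P \<le> dist (loc i) Q"
    and B_prefers_Q: "\<And>j. j \<in> B \<Longrightarrow> 0 < dist (loc j) Q \<and> dist (loc j) Q \<le> dist (loc j) P"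
    and condition:
      "(\<Sum>i\<in>A. (c * strengthP loc P Q i - 1) / (strengthP loc P Q i + 1))
         \<ge> (\<Sum>j\<in>{j\<in>B. strengthQ loc P Q j > c}. (strengthQ loc P Q j - c) / (strengthQ loc P Q j - 1))
           - (\<Sum>j\<in>{j\<in>B. strengthQ loc P Q j \<le> c}. (c - strengthQ loc P Q j) / (strengthQ loc P Q j + 1))"
  shows "SC N loc P \<le> c * SC N loc Q"
proof -
  define D where "D = dist P Q"
  define gap where "gap i = dist (loc i) P - c * dist (loc i) Q" for i
  define B_strong where "B_strong = {j\<in>B. strengthQ loc P Q j > c}"
  define B_weak where "B_weak = {j\<in>B. strengthQ loc P Q j \<le> c}"
  have triangle: "D \<le> dist (loc i) P + dist (loc i) Q" "dist (loc i) P \<le> dist (loc i) Q + D" for i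
    unfolding D_def by (metis dist_commute dist_triangle)+
  have "finite A" "finite B" "finite B_strong" "finite B_weak"
    using assms(2,3) by (auto simp: B_strong_def B_weak_def)
  have "B = B_strong \<union> B_weak" "B_strong \<inter> B_weak = {}" by (auto simp: B_strong_def B_weak_def)
  then have gap_split: "sum gap N = sum gap A + sum gap B_strong + sum gap B_weak"
    using assms(3,4) \<open>finite A\<close> \<open>finite B\<close> \<open>finite B_strong\<close> \<open>finite B_weak\<close>
    by (metis sum.union_disjoint add.assoc)
  have "sum gap A \<le> (\<Sum>i\<in>A. - (D * ((c * strengthP loc P Q i - 1) / (strengthP loc P Q i + 1))))"
    unfolding gap_def strengthP_def
    using gap_le_of_prefers_P[OF \<open>1 \<le> c\<close>] A_prefers_P triangle(1) by (intro sum_mono) blast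
  moreover have "sum gap B_strong
      \<le> (\<Sum>j\<in>B_strong. D * ((strengthQ loc P Q j - c) / (strengthQ loc P Q j - 1)))"
    unfolding gap_def strengthQ_def B_strong_def
    using gap_le_of_strongly_prefers_Q[OF \<open>1 \<le> c\<close>] B_prefers_Q triangle(2) by (intro sum_mono) auto
  moreover have "sum gap B_weak
      \<le> (\<Sum>j\<in>B_weak. - (D * ((c - strengthQ loc P Q j) / (strengthQ loc P Q j + 1))))"
    unfolding gap_def strengthQ_def B_weak_def
    using gap_le_of_weakly_prefers_Q B_prefers_Q triangle(1) by (intro sum_mono) auto
  ultimately have "sum gap N \<le> D * (
      (\<Sum>j\<in>B_strong. (strengthQ loc P Q j - c) / (strengthQ loc P Q j - 1))
      - (\<Sum>j\<in>B_weak. (c - strengthQ loc P Q j) / (strengthQ loc P Q j + 1))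
      - (\<Sum>i\<in>A. (c * strengthP loc P Q i - 1) / (strengthP loc P Q i + 1)))"
    unfolding gap_split sum_negf sum_distrib_left[symmetric] by (simp add: algebra_simps)
  also have "\<dots> \<le> 0"
    using condition by (simp add: D_def B_strong_def B_weak_def mult_nonneg_nonpos)
  finally have "sum gap N \<le> 0" .
  then show ?thesis by (simp add: SC_def gap_def sum_subtractf sum_distrib_left)
qed

theorem mainTheorem11:
  fixes N A B :: "'v set" and loc :: "'v \<Rightarrow> 'a::metric_space" and P Q :: 'a
  assumes "finite N"
    and "A \<union> B = N" and "A \<inter> B = {}"
    and "\<And>i. i \<in> A \<Longrightarrow> dist (loc i) P \<le> dist (loc i) Q"
    and "\<And>j. j \<in> B \<Longrightarrow> dist (loc j) Q \<le> dist (loc j) P"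
    and "\<And>i. i \<in> A \<Longrightarrow> dist (loc i) P > 0"
    and "\<And>j. j \<in> B \<Longrightarrow> dist (loc j) Q > 0"
    and "(\<Sum>i\<in>A. (sqrt 2 * strengthP loc P Q i - 1) / (strengthP loc P Q i + 1))
         \<ge> (\<Sum>j\<in>{j\<in>B. strengthQ loc P Q j > sqrt 2}.
                (strengthQ loc P Q j - sqrt 2) / (strengthQ loc P Q j - 1))
           - (\<Sum>j\<in>{j\<in>B. strengthQ loc P Q j \<le> sqrt 2}.
                (sqrt 2 - strengthQ loc P Q j) / (strengthQ loc P Q j + 1))"
  shows "SC N loc P \<le> sqrt 2 * SC N loc Q"
  by (rule SC_le_scaled_if_strength_condition) (use assms in auto)

end
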